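(* Let $n\geq 3$ and let $F=\sigma_{n-1}$ be the $(n-1)$-th elementary symmetric function on $\mathbb{R}^n$. For every constant $B>0$ there exists a constant $K_0\geq 1$, depending only on $n$ and $B$, with the following property. Let $\lambda=(\lambda_1,\dots,\lambda_n)\in\Gamma_{n-1}$ satisfy $F(\lambda)\leq B$ and $$\lambda_1=\cdots=\lambda_m>\lambda_{m+1}\geq\cdots\geq\lambda_n$$ for some $1\le m\le n$. If $\lambda_n<-K_0$, then $$-\sum_{p\neq q}F^{pp,qq}\xi_p\xi_q+\frac{\left(\sum_i F^{ii}\xi_i\right)^2}{F}+2\sum_{i>m}\frac{F^{ii}\xi_i^2}{\lambda_1-\lambda_i}-\frac{F^{11}\xi_1^2}{\lambda_1}\geq 0$$ for every vector $\xi=(\xi_1,\dots,\xi_n)\in\mathbb{R}^n$ satisfying $\xi_i=0$ for all $1<i\leq m$. Here $F$, $F^{ii}$, $F^{pp,qq}$ are evaluated at $\lambda$.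
   Context: $\sigma_k(\lambda)$ denotes the $k$-th elementary symmetric function of $\lambda\in\mathbb{R}^n$ (with $\sigma_0=1$). Gårding's cone is $\Gamma_k=\{\lambda\in\mathbb{R}^n:\sigma_j(\lambda)>0,\ 1\le j\le k\}$. For $\lambda\in\mathbb{R}^n$, $(\lambda|i)$ denotes the vector in $\mathbb{R}^{n-1}$ obtained by deleting the $i$-th component, and $(\lambda|ij)$ the vector obtained by deleting the $i$-th and $j$-th components. Then $F^{ii}=\frac{\partial \sigma_{n-1}}{\partial\lambda_i}(\lambda)=\sigma_{n-2}(\lambda|i)$ and, for $p\neq q$, $F^{pp,qq}=\frac{\partial^2\sigma_{n-1}}{\partial\lambda_p\partial\lambda_q}(\lambda)=\sigma_{n-3}(\lambda|pq)$. The paper states the dependence of $K_0$ as "depending only on $n$ and $\max F$", i.e. on an upper bound for $F(\lambda)$. *)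

theory Defs
  imports "HOL-Analysis.Analysis"
begin

text \<open>Vectors in R^n are functions nat => real, with components indexed by a finite
index set (for R^n: the set {1..n}). sigma k I lam is the k-th elementary symmetric
function of the components lam i, i in I. Deleting components corresponds to removing
indices from I.\<close>

definition esym :: "nat \<Rightarrow> nat set \<Rightarrow> (nat \<Rightarrow> real) \<Rightarrow> real" where
  "esym k I lam = (\<Sum>S\<in>{S. S \<subseteq> I \<and> card S = k}. \<Prod>i\<in>S. lam i)"

definition garding :: "nat \<Rightarrow> nat \<Rightarrow> (nat \<Rightarrow> real) \<Rightarrow> bool" where
  "garding n k lam = (\<forall>j\<in>{1..k}. esym j {1..n} lam > 0)"

end

theory Submission
  imports Defs
begin

text \<open>Write \<open>u\<^sub>i = 1/\<lambda>\<^sub>i\<close>. In \<open>\<Gamma>\<^sub>n\<^sub>-\<^sub>1\<close> at most one entry is non-positive, so \<open>\<lambda>\<^sub>n < -K\<^sub>0\<close> forces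
  \<open>\<lambda>\<^sub>1, ..., \<lambda>\<^sub>n\<^sub>-\<^sub>1 > 0\<close>. All entries being non-zero, \<open>\<sigma>\<^sub>n\<^sub>-\<^sub>1 = \<sigma>\<^sub>n \<Sum> u\<^sub>i\<close>, and \<open>F\<^sup>i\<^sup>i\<close>,
  \<open>F\<^sup>p\<^sup>p\<^sup>,\<^sup>q\<^sup>q\<close> are explicit in \<open>u\<close>; this turns the quadratic form into \<open>-\<sigma>\<^sub>n > 0\<close> times a form in
  \<open>\<eta>\<^sub>i = \<xi>\<^sub>i/\<lambda>\<^sub>i\<close> with the parameter \<open>\<sigma> = -\<Sum> u\<^sub>i > 0\<close>, and \<open>F \<le> B < |\<lambda>\<^sub>n|\<close> gives \<open>\<sigma> \<lambda>\<^sub>1 < 1\<close>.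
  Cauchy-Schwarz over the indices \<open>1\<close> and \<open>m < p < n\<close>, whose weights are enlarged by the
  gap terms \<open>2F\<^sup>i\<^sup>i\<xi>\<^sub>i\<^sup>2/(\<lambda>\<^sub>1 - \<lambda>\<^sub>i)\<close>, collapses these variables into one; the remaining
  two-variable form is non-negative by an explicit discriminant estimate.\<close>

lemma prod_plus_eq_sum_esym:
  assumes "finite I"
  shows "(\<Prod>i\<in>I. t + lam i) = (\<Sum>j\<le>card I. esym j I lam * t ^ (card I - j))"
proof -
  have "(\<Prod>i\<in>I. t + lam i) = (\<Sum>X\<in>Pow I. (\<Prod>i\<in>X. lam i) * t ^ card (I - X))"
    using prod_add[OF assms, of lam "\<lambda>_. t"] by (simp add: add.commute)
  also have "\<dots> = (\<Sum>j\<le>card I. \<Sum>X\<in>{X \<in> Pow I. card X = j}. (\<Prod>i\<in>X. lam i) * t ^ card (I - X))"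
    using assms by (intro sum.group[symmetric]) (auto intro: card_mono)
  also have "\<dots> = (\<Sum>j\<le>card I. esym j I lam * t ^ (card I - j))"
    unfolding esym_def sum_distrib_right
    by (intro sum.cong refl) (auto simp: card_Diff_subset finite_subset[OF _ assms])
  finally show ?thesis .
qed

lemma esym_0 [simp]: "finite I \<Longrightarrow> esym 0 I lam = 1"
  unfolding esym_def by (simp add: finite_subset card_eq_0_iff cong: conj_cong)

lemma prod_plus_diff_ge_esym:
  assumes "finite I" "I \<noteq> {}"
    and pos: "\<And>j. 1 \<le> j \<Longrightarrow> j < card I \<Longrightarrow> esym j I lam > 0"
    and "0 \<le> c" "c \<le> t"
  shows "esym (card I - 1) I lam * (t - c) \<le> (\<Prod>i\<in>I. t + lam i) - (\<Prod>i\<in>I. c + lam i)"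
proof -
  let ?N = "card I"
  let ?f = "\<lambda>j. esym j I lam * (t ^ (?N - j) - c ^ (?N - j))"
  have N: "?N \<ge> 1" using assms(1,2) by (simp add: Suc_leI card_gt_0_iff)
  have "esym (?N - 1) I lam * (t - c) = ?f (?N - 1)" using N by simp
  also have "\<dots> \<le> (\<Sum>j\<le>?N. ?f j)"
  proof (rule member_le_sum)
    fix j assume j: "j \<in> {..?N} - {?N - 1}"
    have "esym j I lam \<ge> 0 \<or> j = ?N"
      using j pos[of j] assms(1) by (cases "j = 0") force+
    moreover have "c ^ (?N - j) \<le> t ^ (?N - j)" using assms(4,5) by (intro power_mono) auto
    ultimately show "0 \<le> ?f j" by auto
  qed (use N in auto)
  also have "\<dots> = (\<Prod>i\<in>I. t + lam i) - (\<Prod>i\<in>I. c + lam i)"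
    unfolding prod_plus_eq_sum_esym[OF assms(1)] by (simp add: sum_subtractf right_diff_distrib)
  finally show ?thesis .
qed

lemma esym_pos_imp_pos_unless_min:
  assumes "finite I"
    and pos: "\<And>j. 1 \<le> j \<Longrightarrow> j < card I \<Longrightarrow> esym j I lam > 0"
    and "a \<in> I" "b \<in> I" "a \<noteq> b" "lam b \<le> lam a"
  shows "lam a > 0"
proof (rule ccontr)
  \<comment> \<open>\<open>Q t = \<Prod>(t + \<lambda>\<^sub>i)\<close> vanishes at \<open>0 \<le> d \<le> c\<close>, yet its non-negative coefficients give
    \<open>Q t - Q d \<ge> \<sigma>\<^sub>N\<^sub>-\<^sub>1 (t - d)\<close>; dividing by \<open>t - d\<close> and letting \<open>t \<rightarrow> c\<^sup>+\<close> yields \<open>\<sigma>\<^sub>N\<^sub>-\<^sub>1 \<le> 0\<close>.\<close>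
  assume "\<not> lam a > 0"
  define c where "c = - lam b"
  define d where "d = - lam a"
  have "0 \<le> d" "d \<le> c" using \<open>\<not> lam a > 0\<close> \<open>lam b \<le> lam a\<close> by (auto simp: c_def d_def)
  define Q where "Q t = (\<Prod>i\<in>I. t + lam i)" for t
  define H where "H t = (\<Prod>i\<in>I - {a, b}. t + lam i)" for t
  have Q_eq: "Q t = (t - d) * (t - c) * H t" for t
  proof -
    have "Q t = (t + lam a) * (\<Prod>i\<in>I - {a}. t + lam i)"
      unfolding Q_def using \<open>finite I\<close> \<open>a \<in> I\<close> by (rule prod.remove)
    also have "(\<Prod>i\<in>I - {a}. t + lam i) = (t + lam b) * H t"
      unfolding H_def Diff_insert2[of I a "{b}"]
      using \<open>finite I\<close> \<open>b \<in> I\<close> \<open>a \<noteq> b\<close> by (intro prod.remove) auto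
    finally show ?thesis by (simp add: c_def d_def mult.assoc)
  qed
  define s where "s = esym (card I - 1) I lam"
  have "card I \<ge> 2"
    using assms(1,3-5) by (metis card_2_iff card_mono empty_subsetI insert_subset)
  then have "s > 0" unfolding s_def by (intro pos) auto
  have bound: "s \<le> (t - c) * H t" if "c < t" for t
  proof -
    have "s * (t - d) \<le> Q t - Q d"
      unfolding s_def Q_def
      using prod_plus_diff_ge_esym[OF \<open>finite I\<close> _ pos \<open>0 \<le> d\<close>, of t] that \<open>d \<le> c\<close> \<open>a \<in> I\<close>
      by (auto simp: mult.commute)
    also have "\<dots> = (t - d) * ((t - c) * H t)" by (simp add: Q_eq)
    finally show ?thesis using that \<open>d \<le> c\<close> by (simp add: mult.commute)
  qed
  have "eventually (\<lambda>t. s \<le> (t - c) * H t) (at_right c)"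
    using eventually_at_right_less[of c] by (rule eventually_mono) (rule bound)
  moreover have "((\<lambda>t. (t - c) * H t) \<longlongrightarrow> (c - c) * H c) (at_right c)"
    unfolding H_def by (intro tendsto_intros)
  ultimately have "s \<le> 0" by (intro tendsto_lowerbound) auto
  with \<open>s > 0\<close> show False by simp
qed

lemma esym_card_minus_one:
  assumes "finite J" "J \<noteq> {}"
  shows "esym (card J - 1) J lam = (\<Sum>j\<in>J. \<Prod>i\<in>J - {j}. lam i)"
proof -
  have "{S. S \<subseteq> J \<and> card S = card J - 1} = (\<lambda>j. J - {j}) ` J"
  proof (intro equalityI subsetI)
    fix S assume "S \<in> {S. S \<subseteq> J \<and> card S = card J - 1}"
    then have "S \<subseteq> J" "card (J - S) = 1"
      using assms card_gt_0_iff[of J] by (auto simp: card_Diff_subset finite_subset)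
    then obtain j where "J - S = {j}" by (auto simp: card_Suc_eq)
    with \<open>S \<subseteq> J\<close> show "S \<in> (\<lambda>j. J - {j}) ` J" by blast
  qed (use assms in auto)
  moreover have "inj_on (\<lambda>j. J - {j}) J" by (auto simp: inj_on_def)
  ultimately show ?thesis unfolding esym_def by (simp add: sum.reindex)
qed

lemma esym_card_minus_one_nonzero:
  assumes "finite J" "J \<noteq> {}" "\<And>i. i \<in> J \<Longrightarrow> lam i \<noteq> 0"
  shows "esym (card J - 1) J lam = (\<Prod>i\<in>J. lam i) * (\<Sum>j\<in>J. 1 / lam j)"
proof -
  have "(\<Prod>i\<in>J - {j}. lam i) = (\<Prod>i\<in>J. lam i) * (1 / lam j)" if "j \<in> J" for j
    using prod.remove[OF assms(1) that, of lam] assms(3)[OF that] by simp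
  then show ?thesis
    unfolding esym_card_minus_one[OF assms(1,2)] sum_distrib_left by (rule sum.cong[OF refl])
qed

lemma esym_Diff_nonzero:
  assumes "finite I" "K \<subseteq> I" "K \<noteq> I" "\<And>i. i \<in> I \<Longrightarrow> lam i \<noteq> 0"
  shows "esym (card I - card K - 1) (I - K) lam
    = (\<Prod>i\<in>I. lam i) * (\<Prod>k\<in>K. 1 / lam k) * ((\<Sum>i\<in>I. 1 / lam i) - (\<Sum>k\<in>K. 1 / lam k))"
proof -
  have fin: "finite K" using assms(2,1) by (rule finite_subset)
  have "(\<Prod>i\<in>I. lam i) = (\<Prod>i\<in>I - K. lam i) * (\<Prod>k\<in>K. lam k)"
    using prod.subset_diff[OF assms(2,1)] .
  moreover have "(\<Sum>i\<in>I. 1 / lam i) = (\<Sum>i\<in>I - K. 1 / lam i) + (\<Sum>k\<in>K. 1 / lam k)"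
    using sum.subset_diff[OF assms(2,1)] .
  moreover have "(\<Prod>k\<in>K. lam k) * (\<Prod>k\<in>K. 1 / lam k) = 1"
    using assms(2,4) by (simp add: prod.distrib[symmetric] subset_iff)
  moreover have "esym (card I - card K - 1) (I - K) lam
      = (\<Prod>i\<in>I - K. lam i) * (\<Sum>i\<in>I - K. 1 / lam i)"
    using esym_card_minus_one_nonzero[of "I - K" lam] assms fin by (simp add: card_Diff_subset)
  ultimately show ?thesis by (simp add: mult.assoc)
qed

lemma hessian_quotient_identity:
  fixes u xi :: "'a \<Rightarrow> real"
  assumes "finite I" "S \<noteq> 0" "sg \<noteq> 0"
  shows "- (\<Sum>p\<in>I. \<Sum>q\<in>I - {p}. S * (u p * u q) * (sg - (u p + u q)) * xi p * xi q)
      + (\<Sum>i\<in>I. S * u i * (sg - u i) * xi i)\<^sup>2 / (S * sg)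
    = - S * ((\<Sum>p\<in>I. (2 * u p - sg) * (u p * xi p)\<^sup>2) - (\<Sum>p\<in>I. u p * (u p * xi p))\<^sup>2 / sg)"
proof -
  define \<eta> where "\<eta> p = u p * xi p" for p
  define E where "E = (\<Sum>p\<in>I. \<eta> p)"
  define W where "W = (\<Sum>p\<in>I. u p * \<eta> p)"
  define Y where "Y = (\<Sum>p\<in>I. (2 * u p - sg) * (\<eta> p)\<^sup>2)"
  have inner: "(\<Sum>q\<in>I - {p}. S * (u p * u q) * (sg - (u p + u q)) * xi p * xi q)
      = S * \<eta> p * ((sg - u p) * E - W) + S * (2 * u p - sg) * (\<eta> p)\<^sup>2" if "p \<in> I" for p
  proof -
    have "(\<Sum>q\<in>I - {p}. S * (u p * u q) * (sg - (u p + u q)) * xi p * xi q)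
        = (\<Sum>q\<in>I - {p}. S * \<eta> p * ((sg - u p) * \<eta> q - u q * \<eta> q))"
      by (rule sum.cong) (simp_all add: \<eta>_def algebra_simps)
    also have "\<dots> = (\<Sum>q\<in>I. S * \<eta> p * ((sg - u p) * \<eta> q - u q * \<eta> q))
        - S * \<eta> p * ((sg - u p) * \<eta> p - u p * \<eta> p)"
      using assms(1) that by (simp add: sum_diff1)
    also have "(\<Sum>q\<in>I. S * \<eta> p * ((sg - u p) * \<eta> q - u q * \<eta> q)) = S * \<eta> p * ((sg - u p) * E - W)"
      unfolding E_def W_def by (simp add: sum_distrib_left[symmetric] sum_subtractf)
    finally show ?thesis by (simp add: power2_eq_square algebra_simps)
  qed
  have "(\<Sum>p\<in>I. \<Sum>q\<in>I - {p}. S * (u p * u q) * (sg - (u p + u q)) * xi p * xi q)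
      = (\<Sum>p\<in>I. S * ((sg * E - W) * \<eta> p - E * (u p * \<eta> p)) + S * ((2 * u p - sg) * (\<eta> p)\<^sup>2))"
    using inner by (intro sum.cong) (simp_all add: algebra_simps)
  also have "\<dots> = S * ((sg * E - W) * E - E * W) + S * Y"
    unfolding sum.distrib Y_def sum_distrib_left[symmetric]
    unfolding E_def W_def by (simp add: sum_subtractf sum_distrib_left[symmetric])
  also have "\<dots> = S * (sg * E\<^sup>2 - 2 * E * W) + S * Y"
    by (simp add: power2_eq_square algebra_simps)
  finally have quadratic: "(\<Sum>p\<in>I. \<Sum>q\<in>I - {p}. S * (u p * u q) * (sg - (u p + u q)) * xi p * xi q)
      = S * (sg * E\<^sup>2 - 2 * E * W) + S * Y" .
  have linear: "(\<Sum>i\<in>I. S * u i * (sg - u i) * xi i) = S * (sg * E - W)"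
    unfolding E_def W_def \<eta>_def
    by (simp add: sum_subtractf sum_distrib_left[symmetric] algebra_simps)
  have "(S * (sg * E - W))\<^sup>2 / (S * sg) = S * (sg * E\<^sup>2 - 2 * E * W) + S * W\<^sup>2 / sg"
    using assms(2,3) by (simp add: field_simps power2_eq_square; simp add: algebra_simps)
  then show ?thesis
    unfolding quadratic linear by (simp add: Y_def W_def \<eta>_def algebra_simps)
qed

definition max_eigenvalue_form :: "nat \<Rightarrow> nat \<Rightarrow> (nat \<Rightarrow> real) \<Rightarrow> (nat \<Rightarrow> real) \<Rightarrow> real" where
  "max_eigenvalue_form n m lam xi =
     - (\<Sum>p\<in>{1..n}. \<Sum>q\<in>{1..n}-{p}. esym (n - 3) ({1..n} - {p, q}) lam * xi p * xi q)
     + (\<Sum>i\<in>{1..n}. esym (n - 2) ({1..n} - {i}) lam * xi i)\<^sup>2 / esym (n - 1) {1..n} lam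
     + 2 * (\<Sum>i\<in>{m<..n}. esym (n - 2) ({1..n} - {i}) lam * (xi i)\<^sup>2 / (lam 1 - lam i))
     - esym (n - 2) ({1..n} - {1}) lam * (xi 1)\<^sup>2 / lam 1"

definition reduced_form :: "nat \<Rightarrow> nat \<Rightarrow> (nat \<Rightarrow> real) \<Rightarrow> real \<Rightarrow> (nat \<Rightarrow> real) \<Rightarrow> real" where
  "reduced_form n m lam \<sigma> \<eta> =
     (\<Sum>p\<in>{1..n}. (2 / lam p + \<sigma>) * (\<eta> p)\<^sup>2) + (\<Sum>p\<in>{1..n}. \<eta> p / lam p)\<^sup>2 / \<sigma>
     + 2 * (\<Sum>i\<in>{m<..n}. (1 + \<sigma> * lam i) * (\<eta> i)\<^sup>2 / (lam 1 - lam i))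
     - (1 / lam 1 + \<sigma>) * (\<eta> 1)\<^sup>2"

lemma esym_deletions_nonzero:
  fixes lam :: "nat \<Rightarrow> real"
  assumes "3 \<le> n" and nz: "\<forall>i\<in>{1..n}. lam i \<noteq> 0"
  shows "esym (n - 1) {1..n} lam = (\<Prod>i\<in>{1..n}. lam i) * (\<Sum>i\<in>{1..n}. 1 / lam i)"
    and "p \<in> {1..n} \<Longrightarrow> esym (n - 2) ({1..n} - {p}) lam
      = (\<Prod>i\<in>{1..n}. lam i) * (1 / lam p) * ((\<Sum>i\<in>{1..n}. 1 / lam i) - 1 / lam p)"
    and "p \<in> {1..n} \<Longrightarrow> q \<in> {1..n} - {p} \<Longrightarrow> esym (n - 3) ({1..n} - {p, q}) lam
      = (\<Prod>i\<in>{1..n}. lam i) * (1 / lam p * (1 / lam q))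
        * ((\<Sum>i\<in>{1..n}. 1 / lam i) - (1 / lam p + 1 / lam q))"
proof -
  have esym_del: "esym (n - card K - 1) ({1..n} - K) lam = (\<Prod>i\<in>{1..n}. lam i)
      * (\<Prod>k\<in>K. 1 / lam k) * ((\<Sum>i\<in>{1..n}. 1 / lam i) - (\<Sum>k\<in>K. 1 / lam k))"
    if "K \<subseteq> {1..n}" "card K < n" for K
  proof -
    have "K \<noteq> {1..n}" using that(2) by auto
    then show ?thesis using esym_Diff_nonzero[of "{1..n}" K lam] that nz by simp
  qed
  show "esym (n - 1) {1..n} lam = (\<Prod>i\<in>{1..n}. lam i) * (\<Sum>i\<in>{1..n}. 1 / lam i)"
    using esym_del[of "{}"] assms(1) by simp
  show "p \<in> {1..n} \<Longrightarrow> esym (n - 2) ({1..n} - {p}) lam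
      = (\<Prod>i\<in>{1..n}. lam i) * (1 / lam p) * ((\<Sum>i\<in>{1..n}. 1 / lam i) - 1 / lam p)"
    using esym_del[of "{p}"] assms(1) by (simp add: numeral_2_eq_2)
  show "p \<in> {1..n} \<Longrightarrow> q \<in> {1..n} - {p} \<Longrightarrow> esym (n - 3) ({1..n} - {p, q}) lam
      = (\<Prod>i\<in>{1..n}. lam i) * (1 / lam p * (1 / lam q))
        * ((\<Sum>i\<in>{1..n}. 1 / lam i) - (1 / lam p + 1 / lam q))"
    using esym_del[of "{p, q}"] assms(1) by (simp add: numeral_3_eq_3)
qed

lemma max_eigenvalue_form_eq_reduced_form:
  fixes lam xi :: "nat \<Rightarrow> real"
  assumes "3 \<le> n" and nz: "\<forall>i\<in>{1..n}. lam i \<noteq> 0"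
    and \<sigma>: "\<sigma> = - (\<Sum>i\<in>{1..n}. 1 / lam i)" "\<sigma> \<noteq> 0"
  shows "max_eigenvalue_form n m lam xi
    = - (\<Prod>i\<in>{1..n}. lam i) * reduced_form n m lam \<sigma> (\<lambda>i. xi i / lam i)"
proof -
  define S where "S = (\<Prod>i\<in>{1..n}. lam i)"
  have "S \<noteq> 0" using nz by (simp add: S_def)
  note F = esym_deletions_nonzero[OF assms(1) nz]
  have hess: "- (\<Sum>p\<in>{1..n}. \<Sum>q\<in>{1..n}-{p}. esym (n - 3) ({1..n} - {p, q}) lam * xi p * xi q)
     + (\<Sum>i\<in>{1..n}. esym (n - 2) ({1..n} - {i}) lam * xi i)\<^sup>2 / esym (n - 1) {1..n} lam
     = - S * ((\<Sum>p\<in>{1..n}. (2 / lam p + \<sigma>) * (xi p / lam p)\<^sup>2) + (\<Sum>p\<in>{1..n}. xi p / lam p / lam p)\<^sup>2 / \<sigma>)"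
  proof -
    have "(\<Sum>p\<in>{1..n}. \<Sum>q\<in>{1..n}-{p}. esym (n - 3) ({1..n} - {p, q}) lam * xi p * xi q)
        = (\<Sum>p\<in>{1..n}. \<Sum>q\<in>{1..n}-{p}.
            S * (1 / lam p * (1 / lam q)) * (- \<sigma> - (1 / lam p + 1 / lam q)) * xi p * xi q)"
      by (intro sum.cong refl) (simp only: F(3) S_def \<sigma>(1) minus_minus)
    moreover have "(\<Sum>i\<in>{1..n}. esym (n - 2) ({1..n} - {i}) lam * xi i)
        = (\<Sum>i\<in>{1..n}. S * (1 / lam i) * (- \<sigma> - 1 / lam i) * xi i)"
      by (intro sum.cong refl) (simp only: F(2) S_def \<sigma>(1) minus_minus)
    ultimately show ?thesis
      using F(1) hessian_quotient_identity[of "{1..n}" S "- \<sigma>" "\<lambda>i. 1 / lam i" xi]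
        \<open>S \<noteq> 0\<close> \<open>\<sigma> \<noteq> 0\<close>
      by (simp add: S_def \<sigma>(1))
  qed
  have Fi_square: "esym (n - 2) ({1..n} - {i}) lam * (xi i)\<^sup>2 = - S * ((1 + \<sigma> * lam i) * (xi i / lam i)\<^sup>2)"
    if "i \<in> {1..n}" for i
    unfolding F(2)[OF that] using nz that by (simp add: S_def \<sigma>(1) field_simps power2_eq_square)
  have gap_terms: "(\<Sum>i\<in>{m<..n}. esym (n - 2) ({1..n} - {i}) lam * (xi i)\<^sup>2 / (lam 1 - lam i))
      = - S * (\<Sum>i\<in>{m<..n}. (1 + \<sigma> * lam i) * (xi i / lam i)\<^sup>2 / (lam 1 - lam i))"
    unfolding sum_distrib_left
  proof (intro sum.cong refl)
    fix i assume "i \<in> {m<..n}"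
    then have "i \<in> {1..n}" by auto
    from Fi_square[OF this] show "esym (n - 2) ({1..n} - {i}) lam * (xi i)\<^sup>2 / (lam 1 - lam i)
        = - S * ((1 + \<sigma> * lam i) * (xi i / lam i)\<^sup>2 / (lam 1 - lam i))" by simp
  qed
  have first_term: "esym (n - 2) ({1..n} - {1}) lam * (xi 1)\<^sup>2 / lam 1
      = - S * ((1 / lam 1 + \<sigma>) * (xi 1 / lam 1)\<^sup>2)"
    using Fi_square[of 1] nz \<open>3 \<le> n\<close> by (simp add: field_simps power2_eq_square)
  show ?thesis
    unfolding max_eigenvalue_form_def reduced_form_def hess gap_terms first_term S_def[symmetric]
    by (simp add: algebra_simps)
qed

lemma square_sum_div_le:
  fixes a b p q :: real
  assumes "p > 0" "q > 0"
  shows "(a + b)\<^sup>2 / (p + q) \<le> a\<^sup>2 / p + b\<^sup>2 / q"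
proof -
  have "a\<^sup>2 / p + b\<^sup>2 / q - (a + b)\<^sup>2 / (p + q) = (q * a - p * b)\<^sup>2 / (p * q * (p + q))"
    using assms by (simp add: field_simps power2_eq_square)
  also have "\<dots> \<ge> 0" using assms by simp
  finally show ?thesis by simp
qed

lemma Cauchy_Schwarz_ineq_sum_weighted:
  fixes u x c :: "'a \<Rightarrow> real"
  assumes "\<And>i. i \<in> I \<Longrightarrow> c i > 0"
  shows "(\<Sum>i\<in>I. u i * x i)\<^sup>2 \<le> (\<Sum>i\<in>I. c i * (x i)\<^sup>2) * (\<Sum>i\<in>I. (u i)\<^sup>2 / c i)"
proof -
  have "(\<Sum>i\<in>I. u i * x i) = (\<Sum>i\<in>I. (sqrt (c i) * x i) * (u i / sqrt (c i)))"
    using assms by (intro sum.cong refl) (auto simp: less_imp_le dest: assms)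
  moreover have "(\<Sum>i\<in>I. c i * (x i)\<^sup>2) = (\<Sum>i\<in>I. (sqrt (c i) * x i)\<^sup>2)"
    using assms by (intro sum.cong refl) (simp add: power_mult_distrib less_imp_le)
  moreover have "(\<Sum>i\<in>I. (u i)\<^sup>2 / c i) = (\<Sum>i\<in>I. (u i / sqrt (c i))\<^sup>2)"
    using assms by (intro sum.cong refl) (simp add: power_divide less_imp_le)
  ultimately show ?thesis by (simp only: Cauchy_Schwarz_ineq_sum)
qed

lemma reduced_form_two_dim_nonneg:
  fixes b l P g V e :: real
  assumes "b > 0" "l > 0" "P > 0" "g = 1 / b - P" "g > 0" "g * l \<le> 1"
  shows "0 \<le> 2 * V\<^sup>2 / P + (- 2 / b + g + 2 * (1 - g * b) / (l + b)) * e\<^sup>2 + (V - e / b)\<^sup>2 / g"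
proof -
  define x where "x = b * P"
  have "x = 1 - b * g" using assms by (simp add: x_def field_simps)
  then have "x < 1" using assms(1,5) by simp
  have "0 < x" using assms by (simp add: x_def)
  have g: "g = (1 - x) / b" using \<open>x = 1 - b * g\<close> assms(1) by (simp add: field_simps)
  have "(e / b)\<^sup>2 / (P / 2 + g) \<le> V\<^sup>2 / (P / 2) + (e / b - V)\<^sup>2 / g"
    using square_sum_div_le[of "P / 2" g V "e / b - V"] assms by simp
  moreover have "(e / b)\<^sup>2 / (P / 2 + g) = 2 / (b * (2 - x)) * e\<^sup>2"
    using assms(1) \<open>x < 1\<close> unfolding assms(4) by (simp add: x_def field_simps power2_eq_square)
  moreover have "(V - e / b)\<^sup>2 / g = (e / b - V)\<^sup>2 / g" by (simp add: power2_commute)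
  moreover have "V\<^sup>2 / (P / 2) = 2 * V\<^sup>2 / P" by simp
  moreover have "0 \<le> (- 2 / b + g + 2 * (1 - g * b) / (l + b)) + 2 / (b * (2 - x))"
  proof -
    have "(1 - x) * l = b * (g * l)" unfolding \<open>x = 1 - b * g\<close> by (simp add: algebra_simps)
    also have "\<dots> \<le> b" using assms(1,6) by (simp add: mult_left_le)
    finally have "(1 - x) * l \<le> b" .
    have "(1 - x) * (l + b) = (1 - x) * l + (1 - x) * b" by (simp add: distrib_left)
    also have "\<dots> \<le> b + (1 - x) * b" using \<open>(1 - x) * l \<le> b\<close> by simp
    also have "\<dots> \<le> 2 * (2 - x) * b" using \<open>x < 1\<close> assms(1) by (simp add: algebra_simps)
    finally have "x * ((1 - x) * (l + b)) \<le> x * (2 * (2 - x) * b)"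
      using \<open>0 < x\<close> by (intro mult_left_mono) auto
    then have "x * (1 - x) / (b * (2 - x)) \<le> 2 * x / (l + b)"
      using assms(1,2) \<open>x < 1\<close> by (simp add: divide_le_eq le_divide_eq field_simps)
    moreover have "- 2 / b + g = - (1 + x) / b" using assms(1) unfolding g by (simp add: field_simps)
    moreover have "2 * (1 - g * b) / (l + b) = 2 * x / (l + b)" using assms(1) unfolding g by simp
    moreover have "- (1 + x) / b + 2 / (b * (2 - x)) = - (x * (1 - x) / (b * (2 - x)))"
      using assms(1) \<open>x < 1\<close> by (simp add: field_simps)
    ultimately show ?thesis by linarith
  qed
  then have "0 \<le> (- 2 / b + g + 2 * (1 - g * b) / (l + b)) * e\<^sup>2 + 2 / (b * (2 - x)) * e\<^sup>2"
    by (metis distrib_right mult_nonneg_nonneg zero_le_power2)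
  ultimately show ?thesis by argo
qed

lemma sum_block_split:
  fixes h :: "nat \<Rightarrow> real"
  assumes "1 \<le> m" "m < n" "\<And>p. 1 < p \<Longrightarrow> p \<le> m \<Longrightarrow> h p = 0"
  shows "(\<Sum>p\<in>{1..n}. h p) = h 1 + (\<Sum>p\<in>{m<..<n}. h p) + h n"
proof -
  have "{1..n} = insert 1 (insert n ({1<..m} \<union> {m<..<n}))" using assms(1,2) by auto
  moreover have "(\<Sum>p\<in>{1<..m} \<union> {m<..<n}. h p) = (\<Sum>p\<in>{1<..m}. h p) + (\<Sum>p\<in>{m<..<n}. h p)"
    by (rule sum.union_disjoint) auto
  moreover have "(\<Sum>p\<in>{1<..m}. h p) = 0" using assms(3) by (intro sum.neutral) auto
  ultimately show ?thesis using assms(1,2) by simp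
qed

lemma inverse_square_div_le:
  fixes x l c :: real
  assumes "0 < x" "x < l" "2 / x + 2 / (l - x) \<le> c"
  shows "(1 / x)\<^sup>2 / c \<le> (1 / x - 1 / l) / 2"
proof -
  have "(1 / x)\<^sup>2 / c \<le> (1 / x)\<^sup>2 / (2 / x + 2 / (l - x))"
  proof (rule divide_left_mono)
    have "0 < 2 / x + 2 / (l - x)" using assms(1,2) by (intro add_pos_pos divide_pos_pos) auto
    with assms(3) show "0 < c * (2 / x + 2 / (l - x))" by simp
  qed (use assms in auto)
  also have "\<dots> = (1 / x - 1 / l) / 2"
    using assms(1,2) by (simp add: field_simps power2_eq_square)
  finally show ?thesis .
qed

lemma inverse_weights_le_half_inverse_sum:
  fixes lam c :: "nat \<Rightarrow> real"
  assumes "3 \<le> n" "1 \<le> m" "m < n" "lam 1 > 0"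
    and top: "\<And>i. i \<in> {1..m} \<Longrightarrow> lam i = lam 1"
    and gap: "\<And>p. p \<in> {m<..<n} \<Longrightarrow> 0 < lam p \<and> lam p < lam 1"
    and c: "\<And>p. p \<in> {m<..<n} \<Longrightarrow> 2 / lam p + 2 / (lam 1 - lam p) \<le> c p"
  shows "1 / lam 1 + (\<Sum>p\<in>{m<..<n}. (1 / lam p)\<^sup>2 / c p) \<le> (\<Sum>i\<in>{1..<n}. 1 / lam i) / 2"
proof -
  define R where "R = {m<..<n}"
  define k where "k = 1 / lam 1"
  have "(\<Sum>p\<in>R. (1 / lam p)\<^sup>2 / c p) \<le> (\<Sum>p\<in>R. (1 / lam p - k) / 2)"
    unfolding R_def k_def using gap c by (intro sum_mono inverse_square_div_le) auto
  also have "\<dots> = ((\<Sum>p\<in>R. 1 / lam p) - real (card R) * k) / 2"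
    by (simp add: sum_subtractf sum_divide_distrib[symmetric])
  finally have "k + (\<Sum>p\<in>R. (1 / lam p)\<^sup>2 / c p) \<le> k + ((\<Sum>p\<in>R. 1 / lam p) - real (card R) * k) / 2"
    by simp
  moreover have "(\<Sum>i\<in>{1..<n}. 1 / lam i) = real m * k + (\<Sum>p\<in>R. 1 / lam p)"
  proof -
    have "{1..<n} = {1..m} \<union> R" using assms(3) by (auto simp: R_def)
    then have "(\<Sum>i\<in>{1..<n}. 1 / lam i) = (\<Sum>p\<in>{1..m} \<union> R. 1 / lam p)" by simp
    also have "\<dots> = (\<Sum>p\<in>{1..m}. 1 / lam p) + (\<Sum>p\<in>R. 1 / lam p)"
      by (rule sum.union_disjoint) (auto simp: R_def)
    also have "(\<Sum>p\<in>{1..m}. 1 / lam p) = (\<Sum>p\<in>{1..m}. k)"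
      by (rule sum.cong[OF refl]) (metis top k_def)
    finally show ?thesis by simp
  qed
  moreover have "real (card R) * k = real n * k - real m * k - k"
    using assms(3) by (simp add: R_def of_nat_diff algebra_simps)
  moreover have "3 * k \<le> real n * k"
    using assms(1,4) by (intro mult_right_mono) (auto simp: k_def)
  ultimately show ?thesis unfolding R_def k_def by argo
qed

lemma collapse_by_Cauchy_Schwarz:
  fixes lam c \<eta> :: "nat \<Rightarrow> real"
  assumes "finite R" "1 \<notin> R" "lam 1 > 0" "\<And>p. p \<in> R \<Longrightarrow> c p > 0" "P > 0"
    and weights: "1 / lam 1 + (\<Sum>p\<in>R. (1 / lam p)\<^sup>2 / c p) \<le> P / 2"
  shows "2 * (\<eta> 1 / lam 1 + (\<Sum>p\<in>R. \<eta> p / lam p))\<^sup>2 / P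
    \<le> (\<eta> 1)\<^sup>2 / lam 1 + (\<Sum>p\<in>R. c p * (\<eta> p)\<^sup>2)"
    (is "2 * ?V\<^sup>2 / P \<le> ?Z")
proof -
  define w where "w p = (if p = 1 then 1 / lam 1 else c p)" for p
  have w_R: "w p = c p" if "p \<in> R" for p using that assms(2) by (auto simp: w_def)
  have "w p > 0" if "p \<in> insert 1 R" for p
    using that assms(3,4) w_R by (auto simp: w_def)
  then have "(\<Sum>p\<in>insert 1 R. 1 / lam p * \<eta> p)\<^sup>2
      \<le> (\<Sum>p\<in>insert 1 R. w p * (\<eta> p)\<^sup>2) * (\<Sum>p\<in>insert 1 R. (1 / lam p)\<^sup>2 / w p)"
    by (rule Cauchy_Schwarz_ineq_sum_weighted)
  moreover have "(\<Sum>p\<in>R. w p * (\<eta> p)\<^sup>2) = (\<Sum>p\<in>R. c p * (\<eta> p)\<^sup>2)"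
    by (intro sum.cong refl) (simp add: w_R)
  moreover have "(\<Sum>p\<in>R. (1 / lam p)\<^sup>2 / w p) = (\<Sum>p\<in>R. (1 / lam p)\<^sup>2 / c p)"
    by (intro sum.cong refl) (simp add: w_R)
  ultimately have "?V\<^sup>2 \<le> ?Z * (1 / lam 1 + (\<Sum>p\<in>R. (1 / lam p)\<^sup>2 / c p))"
    using assms(1-3) by (simp add: w_def power2_eq_square)
  also have "\<dots> \<le> ?Z * (P / 2)"
  proof (rule mult_left_mono[OF weights])
    show "0 \<le> ?Z" using assms(3,4)
      by (intro add_nonneg_nonneg sum_nonneg mult_nonneg_nonneg) (auto intro: less_imp_le)
  qed
  finally show ?thesis using assms(5) by (simp add: field_simps)
qed

lemma reduced_form_split:
  fixes lam \<eta> :: "nat \<Rightarrow> real"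
  assumes "1 \<le> m" "m < n" "\<forall>i. 1 < i \<and> i \<le> m \<longrightarrow> \<eta> i = 0"
  shows "reduced_form n m lam \<sigma> \<eta>
    = (\<eta> 1)\<^sup>2 / lam 1
      + (\<Sum>p\<in>{m<..<n}. (2 / lam p + \<sigma> + 2 * (1 + \<sigma> * lam p) / (lam 1 - lam p)) * (\<eta> p)\<^sup>2)
      + (2 / lam n + \<sigma> + 2 * (1 + \<sigma> * lam n) / (lam 1 - lam n)) * (\<eta> n)\<^sup>2
      + (\<eta> 1 / lam 1 + (\<Sum>p\<in>{m<..<n}. \<eta> p / lam p) + \<eta> n / lam n)\<^sup>2 / \<sigma>"
proof -
  have "(\<Sum>p\<in>{1..n}. (2 / lam p + \<sigma>) * (\<eta> p)\<^sup>2) = (2 / lam 1 + \<sigma>) * (\<eta> 1)\<^sup>2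
      + (\<Sum>p\<in>{m<..<n}. (2 / lam p + \<sigma>) * (\<eta> p)\<^sup>2) + (2 / lam n + \<sigma>) * (\<eta> n)\<^sup>2"
    using sum_block_split[OF assms(1,2)] assms(3) by simp
  moreover have "(\<Sum>p\<in>{1..n}. \<eta> p / lam p)
      = \<eta> 1 / lam 1 + (\<Sum>p\<in>{m<..<n}. \<eta> p / lam p) + \<eta> n / lam n"
    using sum_block_split[OF assms(1,2)] assms(3) by simp
  moreover have "{m<..n} = insert n {m<..<n}" using assms(2) by auto
  moreover have "(\<Sum>p\<in>{m<..<n}. (2 / lam p + \<sigma> + 2 * (1 + \<sigma> * lam p) / (lam 1 - lam p)) * (\<eta> p)\<^sup>2)
      = (\<Sum>p\<in>{m<..<n}. (2 / lam p + \<sigma>) * (\<eta> p)\<^sup>2)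
        + 2 * (\<Sum>p\<in>{m<..<n}. (1 + \<sigma> * lam p) * (\<eta> p)\<^sup>2 / (lam 1 - lam p))"
    by (simp add: sum.distrib sum_distrib_left algebra_simps)
  ultimately show ?thesis unfolding reduced_form_def by (simp add: algebra_simps)
qed

lemma reduced_form_nonneg:
  fixes lam \<eta> :: "nat \<Rightarrow> real"
  assumes "3 \<le> n" "1 \<le> m" "m < n"
    and top: "\<And>i. i \<in> {1..m} \<Longrightarrow> lam i = lam 1"
    and below: "\<And>i. i \<in> {m<..<n} \<Longrightarrow> lam i < lam 1"
    and pos: "\<And>i. i \<in> {1..<n} \<Longrightarrow> lam i > 0" and "lam n < 0"
    and \<sigma>: "\<sigma> = - (\<Sum>i\<in>{1..n}. 1 / lam i)" "\<sigma> > 0" "\<sigma> * lam 1 \<le> 1"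
    and \<eta>0: "\<And>i. 1 < i \<Longrightarrow> i \<le> m \<Longrightarrow> \<eta> i = 0"
  shows "0 \<le> reduced_form n m lam \<sigma> \<eta>"
proof -
  define R where "R = {m<..<n}"
  define b where "b = - lam n"
  define l where "l = lam 1"
  define P where "P = (\<Sum>i\<in>{1..<n}. 1 / lam i)"
  define c where "c p = 2 / lam p + \<sigma> + 2 * (1 + \<sigma> * lam p) / (l - lam p)" for p
  define V where "V = \<eta> 1 / l + (\<Sum>p\<in>R. \<eta> p / lam p)"
  define Z where "Z = (\<eta> 1)\<^sup>2 / l + (\<Sum>p\<in>R. c p * (\<eta> p)\<^sup>2)"
  have "l > 0" "b > 0" "P > 0" using pos assms(1,7) by (auto simp: l_def b_def P_def intro!: sum_pos)
  have R: "0 < lam p \<and> lam p < l" if "p \<in> R" for p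
    using that assms(2) pos below by (auto simp: R_def l_def)
  have "\<sigma> = 1 / b - P"
    unfolding \<sigma> P_def b_def using assms(1) by (simp add: atLeastLessThanSuc_atLeastAtMost[symmetric])
  have decomposition: "reduced_form n m lam \<sigma> \<eta>
      = Z + (- 2 / b + \<sigma> + 2 * (1 - \<sigma> * b) / (l + b)) * (\<eta> n)\<^sup>2 + (V - \<eta> n / b)\<^sup>2 / \<sigma>"
  proof -
    have "2 / lam n + \<sigma> + 2 * (1 + \<sigma> * lam n) / (lam 1 - lam n)
        = - 2 / b + \<sigma> + 2 * (1 - \<sigma> * b) / (l + b)"
      by (simp add: b_def l_def)
    moreover have "\<eta> 1 / lam 1 + (\<Sum>p\<in>{m<..<n}. \<eta> p / lam p) + \<eta> n / lam n = V - \<eta> n / b"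
      by (simp add: V_def R_def l_def b_def)
    ultimately show ?thesis
      using \<eta>0 by (subst reduced_form_split[OF assms(2,3)]) (auto simp: Z_def c_def R_def l_def)
  qed
  have c_ge: "2 / lam p + 2 / (l - lam p) \<le> c p" if "p \<in> R" for p
  proof -
    have "2 / (l - lam p) \<le> 2 * (1 + \<sigma> * lam p) / (l - lam p)"
      using R[OF that] \<open>\<sigma> > 0\<close> by (intro divide_right_mono) auto
    then show ?thesis unfolding c_def using \<open>\<sigma> > 0\<close> by linarith
  qed
  have "2 * V\<^sup>2 / P \<le> Z"
    unfolding V_def Z_def l_def
  proof (rule collapse_by_Cauchy_Schwarz)
    show "c p > 0" if "p \<in> R" for p
      using R[OF that] c_ge[OF that] by (smt (verit) divide_pos_pos)
    show "1 / lam 1 + (\<Sum>p\<in>R. (1 / lam p)\<^sup>2 / c p) \<le> P / 2"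
      unfolding R_def P_def using R c_ge \<open>l > 0\<close>
      by (intro inverse_weights_le_half_inverse_sum[where lam = lam, OF assms(1-3) _ top])
        (auto simp: R_def l_def)
  qed (use assms(2) \<open>l > 0\<close> \<open>P > 0\<close> in \<open>auto simp: R_def l_def\<close>)
  moreover have "0 \<le> 2 * V\<^sup>2 / P + (- 2 / b + \<sigma> + 2 * (1 - \<sigma> * b) / (l + b)) * (\<eta> n)\<^sup>2
      + (V - \<eta> n / b)\<^sup>2 / \<sigma>"
    using \<open>b > 0\<close> \<open>l > 0\<close> \<open>P > 0\<close> \<open>\<sigma> = 1 / b - P\<close> \<sigma>(2,3)
    by (intro reduced_form_two_dim_nonneg) (simp_all add: l_def mult.commute)
  ultimately show ?thesis unfolding decomposition by linarith
qed

lemma sorted_block_bounds: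
  fixes lam :: "nat \<Rightarrow> real"
  assumes "1 \<le> m" "m \<le> n" and top: "\<forall>i\<in>{1..m}. lam i = lam 1"
    and gap: "m < n \<longrightarrow> lam m > lam (m + 1)"
    and sorted: "\<forall>i j. m + 1 \<le> i \<longrightarrow> i \<le> j \<longrightarrow> j \<le> n \<longrightarrow> lam j \<le> lam i"
  shows "\<forall>i\<in>{m<..n}. lam i < lam 1" and "\<forall>i\<in>{1..n}. lam n \<le> lam i"
proof -
  have "lam m = lam 1" using top[rule_format, of m] assms(1) by simp
  show below: "\<forall>i\<in>{m<..n}. lam i < lam 1"
  proof
    fix i assume "i \<in> {m<..n}"
    then have "lam i \<le> lam (m + 1)" "lam (m + 1) < lam m" using sorted gap by auto
    with \<open>lam m = lam 1\<close> show "lam i < lam 1" by simp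
  qed
  show "\<forall>i\<in>{1..n}. lam n \<le> lam i"
  proof
    fix i assume "i \<in> {1..n}"
    show "lam n \<le> lam i"
    proof (cases "i \<le> m")
      case True
      then have "lam i = lam 1" using top[rule_format, of i] \<open>i \<in> {1..n}\<close> by simp
      moreover have "lam n \<le> lam 1"
        using below \<open>lam m = lam 1\<close> assms(2) by (cases "m = n") (auto intro: less_imp_le)
      ultimately show ?thesis by simp
    next
      case False
      then show ?thesis using \<open>i \<in> {1..n}\<close> sorted by auto
    qed
  qed
qed

lemma garding_pos_unless_last:
  fixes lam :: "nat \<Rightarrow> real"
  assumes "garding n (n - 1) lam" "2 \<le> n" "\<forall>i\<in>{1..n}. lam n \<le> lam i" "lam n < 0"
  shows "\<forall>i\<in>{1..<n}. lam i > 0" and "(\<Prod>i\<in>{1..n}. lam i) < 0"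
    and "0 < - (\<Sum>i\<in>{1..n}. 1 / lam i)"
proof -
  have esym_pos: "esym j {1..n} lam > 0" if "1 \<le> j" "j < card {1..n}" for j
    using assms(1) that by (auto simp: garding_def)
  show pos: "\<forall>i\<in>{1..<n}. lam i > 0"
  proof
    fix i assume "i \<in> {1..<n}"
    then show "lam i > 0"
      using esym_pos_imp_pos_unless_min[of "{1..n}" lam i n] esym_pos assms(3) by auto
  qed
  have "(\<Prod>i\<in>{1..n}. lam i) = lam n * (\<Prod>i\<in>{1..<n}. lam i)"
    using assms(2) by (simp add: atLeastLessThanSuc_atLeastAtMost[symmetric] atLeastLessThanSuc)
  moreover have "(\<Prod>i\<in>{1..<n}. lam i) > 0" using pos by (intro prod_pos) auto
  ultimately show neg: "(\<Prod>i\<in>{1..n}. lam i) < 0" using assms(4) by (simp add: mult_neg_pos)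
  have "lam i \<noteq> 0" if "i \<in> {1..n}" for i
    using pos[rule_format, of i] assms(4) that by (cases "i = n") auto
  then have "esym (n - 1) {1..n} lam = (\<Prod>i\<in>{1..n}. lam i) * (\<Sum>i\<in>{1..n}. 1 / lam i)"
    using esym_card_minus_one_nonzero[of "{1..n}" lam] assms(2) by simp
  moreover have "esym (n - 1) {1..n} lam > 0" using esym_pos assms(2) by simp
  ultimately show "0 < - (\<Sum>i\<in>{1..n}. 1 / lam i)" using neg by (simp add: zero_less_mult_iff)
qed

lemma inverse_sum_mult_first_le_one:
  fixes lam :: "nat \<Rightarrow> real"
  assumes "2 \<le> n" and pos: "\<And>i. i \<in> {1..<n} \<Longrightarrow> lam i > 0" and "lam n < - 1"
    and "0 < - (\<Sum>i\<in>{1..n}. 1 / lam i)" and "esym (n - 1) {1..n} lam \<le> - lam n"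
  shows "- (\<Sum>i\<in>{1..n}. 1 / lam i) * lam 1 \<le> 1"
proof -
  define \<sigma> where "\<sigma> = - (\<Sum>i\<in>{1..n}. 1 / lam i)"
  have split: "{1..n} = insert n {1..<n}" "{1..<n} = insert 1 {2..<n}" using assms(1) by auto
  have \<sigma>_split: "\<sigma> = 1 / - lam n - (\<Sum>i\<in>{1..<n}. 1 / lam i)" unfolding \<sigma>_def split(1) by simp
  have large: "- lam n \<le> lam i" if "i \<in> {1..<n}" for i
  proof -
    have "1 / lam i \<le> (\<Sum>i\<in>{1..<n}. 1 / lam i)"
      using that pos by (intro member_le_sum) (auto intro: less_imp_le)
    also have "\<dots> < 1 / - lam n" using \<sigma>_split assms(4) by (simp add: \<sigma>_def)
    finally show ?thesis using pos[OF that] assms(3) by (simp add: field_simps)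
  qed
  have "1 \<le> (\<Prod>i\<in>{2..<n}. lam i)"
  proof (rule prod_ge_1)
    fix i assume "i \<in> {2..<n}"
    then have "- lam n \<le> lam i" by (intro large) auto
    with assms(3) show "1 \<le> lam i" by linarith
  qed
  then have "- lam n * lam 1 \<le> - lam n * lam 1 * (\<Prod>i\<in>{2..<n}. lam i)"
    using pos[of 1] assms(1,3) by (simp add: mult_le_cancel_left1)
  also have "\<dots> = - (\<Prod>i\<in>{1..n}. lam i)" unfolding split using assms(1) by simp
  finally have "- lam n * lam 1 * \<sigma> \<le> - (\<Prod>i\<in>{1..n}. lam i) * \<sigma>"
    using assms(4) by (intro mult_right_mono) (auto simp: \<sigma>_def)
  also have "\<dots> = esym (n - 1) {1..n} lam"
  proof -
    have "lam i \<noteq> 0" if "i \<in> {1..n}" for i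
      using pos[of i] assms(3) that by (cases "i = n") auto
    then show ?thesis
      using esym_card_minus_one_nonzero[of "{1..n}" lam] assms(1) by (simp add: \<sigma>_def)
  qed
  also have "\<dots> \<le> - lam n * 1" using assms(5) by simp
  finally have "- lam n * (\<sigma> * lam 1) \<le> - lam n * 1" by (simp add: mult_ac)
  then show ?thesis
    using mult_le_cancel_left_pos[of "- lam n" "\<sigma> * lam 1" 1] assms(3) by (simp add: \<sigma>_def)
qed

theorem lemma3p1:
  fixes n :: nat and B :: real
  assumes "n \<ge> 3" and "B > 0"
  shows "\<exists>K0::real. K0 \<ge> 1 \<and>
    (\<forall>(lam :: nat \<Rightarrow> real) (m :: nat).
      garding n (n - 1) lam \<longrightarrow>
      esym (n - 1) {1..n} lam \<le> B \<longrightarrow>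
      1 \<le> m \<longrightarrow> m \<le> n \<longrightarrow>
      (\<forall>i\<in>{1..m}. lam i = lam 1) \<longrightarrow>
      (m < n \<longrightarrow> lam m > lam (m + 1)) \<longrightarrow>
      (\<forall>i j. m + 1 \<le> i \<longrightarrow> i \<le> j \<longrightarrow> j \<le> n \<longrightarrow> lam j \<le> lam i) \<longrightarrow>
      lam n < - K0 \<longrightarrow>
      (\<forall>xi :: nat \<Rightarrow> real. (\<forall>i. 1 < i \<and> i \<le> m \<longrightarrow> xi i = 0) \<longrightarrow>
        - (\<Sum>p\<in>{1..n}. \<Sum>q\<in>{1..n}-{p}. esym (n - 3) ({1..n} - {p, q}) lam * xi p * xi q)
        + (\<Sum>i\<in>{1..n}. esym (n - 2) ({1..n} - {i}) lam * xi i)\<^sup>2 / esym (n - 1) {1..n} lam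
        + 2 * (\<Sum>i\<in>{m<..n}. esym (n - 2) ({1..n} - {i}) lam * (xi i)\<^sup>2 / (lam 1 - lam i))
        - esym (n - 2) ({1..n} - {1}) lam * (xi 1)\<^sup>2 / lam 1
        \<ge> 0))"
proof (intro exI[of _ "max 1 B"] conjI allI impI, fold max_eigenvalue_form_def)
  fix lam :: "nat \<Rightarrow> real" and m :: nat and xi :: "nat \<Rightarrow> real"
  assume G: "garding n (n - 1) lam" and FB: "esym (n - 1) {1..n} lam \<le> B"
    and m: "1 \<le> m" "m \<le> n" and top: "\<forall>i\<in>{1..m}. lam i = lam 1"
    and gap: "m < n \<longrightarrow> lam m > lam (m + 1)"
    and sorted: "\<forall>i j. m + 1 \<le> i \<longrightarrow> i \<le> j \<longrightarrow> j \<le> n \<longrightarrow> lam j \<le> lam i"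
    and K0: "lam n < - max 1 B" and xi0: "\<forall>i. 1 < i \<and> i \<le> m \<longrightarrow> xi i = 0"
  \<comment> \<open>\<open>\<lambda>\<^sub>n < -1\<close> forces the other entries above \<open>1\<close>, and \<open>\<lambda>\<^sub>n < -B\<close> turns \<open>F \<le> B\<close>
    into \<open>\<sigma> \<lambda>\<^sub>1 \<le> 1\<close>.\<close>
  have last: "lam n < - 1" "B < - lam n" using K0 by auto
  define \<sigma> where "\<sigma> = - (\<Sum>i\<in>{1..n}. 1 / lam i)"
  have below: "\<forall>i\<in>{m<..n}. lam i < lam 1" and min: "\<forall>i\<in>{1..n}. lam n \<le> lam i"
    using sorted_block_bounds[OF m top gap sorted] by auto
  have pos: "\<forall>i\<in>{1..<n}. lam i > 0" and prod_neg: "(\<Prod>i\<in>{1..n}. lam i) < 0" and "\<sigma> > 0"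
    using garding_pos_unless_last[OF G _ min] last(1) assms(1) by (auto simp: \<sigma>_def)
  have "m < n"
    using pos[rule_format, of 1] top[rule_format, of n] last(1) m assms(1) by (cases "m = n") auto
  have "\<sigma> * lam 1 \<le> 1"
    using inverse_sum_mult_first_le_one[of n lam] pos last FB \<open>\<sigma> > 0\<close> assms(1) by (simp add: \<sigma>_def)
  have "0 \<le> reduced_form n m lam \<sigma> (\<lambda>i. xi i / lam i)"
    using below pos last(1) \<open>\<sigma> > 0\<close> \<open>\<sigma> * lam 1 \<le> 1\<close> xi0
    by (intro reduced_form_nonneg[where lam = lam, OF assms(1) m(1) \<open>m < n\<close> top[rule_format]])
      (auto simp: \<sigma>_def)
  moreover have "max_eigenvalue_form n m lam xi
      = - (\<Prod>i\<in>{1..n}. lam i) * reduced_form n m lam \<sigma> (\<lambda>i. xi i / lam i)"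
  proof (rule max_eigenvalue_form_eq_reduced_form)
    show "\<forall>i\<in>{1..n}. lam i \<noteq> 0"
    proof
      fix i assume "i \<in> {1..n}"
      then show "lam i \<noteq> 0" using pos[rule_format, of i] last(1) by (cases "i = n") auto
    qed
  qed (use assms(1) \<open>\<sigma> > 0\<close> in \<open>auto simp: \<sigma>_def\<close>)
  ultimately show "0 \<le> max_eigenvalue_form n m lam xi"
    using prod_neg by (simp add: mult_nonpos_nonneg)
qed simp

end
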